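(* Let $\pi_2$ be the five-dimensional complex associative algebra with basis $e_1,\dots,e_5$ and nonzero products $e_1e_1=e_2$, $e_1e_2=e_2e_1=e_3$, $e_1e_4=e_4e_1=e_5$, $e_4e_4=e_5$ (all other products of basis elements are zero). A linear operator on $\pi_2$ is a local automorphism if and only if its matrix has the form $$\begin{pmatrix} b_{11} & 0 & 0 & 0 & 0 \\ b_{21} & b_{22} & 0 & 0 & 0 \\ b_{31} & b_{32} & b_{33} & b_{34} & 0 \\ b_{41} & 0 & 0 & b_{41}+b_{11} & 0 \\ b_{51} & b_{52} & 0 & b_{54} & b_{22}+b_{52} \end{pmatrix},$$ where $b_{11},b_{21},b_{22},b_{31},b_{32},b_{33},b_{34},b_{41},b_{51},b_{52},b_{54}\in\mathbb{C}$ satisfy $b_{11}b_{22}b_{33}(b_{41}+b_{11})(b_{22}+b_{52})\neq 0$.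
   Context: The matrix of a linear operator $T$ is taken with respect to the basis $e_1,\dots,e_5$, with the $j$-th column giving the coordinates of $T(e_j)$ (so $\overline{T(x)}=B\bar{x}$ for coordinate columns). An automorphism of an algebra $A$ is a bijective linear map $\Phi$ with $\Phi(xy)=\Phi(x)\Phi(y)$ for all $x,y$. A linear map $\Phi:A\to A$ is a local automorphism if for every $\nu\in A$ there is an automorphism $\varphi_\nu$ of $A$ (depending on $\nu$) with $\Phi(\nu)=\varphi_\nu(\nu)$. *)

theory Defs
  imports "HOL-Analysis.Analysis"
begin

(* The algebra pi_2 is modelled on complex^5; the basis vector e_k (k = 1..5)
   is axis (ix k) 1, where ix k is the k-th index of the 5-element index type
   (ix 5 = 0 in the numeral type 5, which is distinct from ix 1, ..., ix 4). *)

definition ix :: "nat \<Rightarrow> 5" where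
  "ix k = of_nat k"

definition e :: "nat \<Rightarrow> complex ^ 5" where
  "e k = axis (ix k) 1"

definition co :: "complex ^ 5 \<Rightarrow> nat \<Rightarrow> complex" where
  "co x k = x $ ix k"

definition pi2_mult :: "complex ^ 5 \<Rightarrow> complex ^ 5 \<Rightarrow> complex ^ 5" where
  "pi2_mult x y =
     co x 1 * co y 1 *s e 2
     + (co x 1 * co y 2 + co x 2 * co y 1) *s e 3
     + (co x 1 * co y 4 + co x 4 * co y 1 + co x 4 * co y 4) *s e 5"

definition clinear :: "(complex ^ 5 \<Rightarrow> complex ^ 5) \<Rightarrow> bool" where
  "clinear f \<longleftrightarrow> Vector_Spaces.linear (*s) (*s) f"

definition pi2_automorphism :: "(complex ^ 5 \<Rightarrow> complex ^ 5) \<Rightarrow> bool" where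
  "pi2_automorphism \<phi> \<longleftrightarrow> clinear \<phi> \<and> bij \<phi> \<and>
     (\<forall>x y. \<phi> (pi2_mult x y) = pi2_mult (\<phi> x) (\<phi> y))"

definition pi2_local_automorphism :: "(complex ^ 5 \<Rightarrow> complex ^ 5) \<Rightarrow> bool" where
  "pi2_local_automorphism \<Phi> \<longleftrightarrow> clinear \<Phi> \<and>
     (\<forall>v. \<exists>\<phi>. pi2_automorphism \<phi> \<and> \<Phi> v = \<phi> v)"

definition matentry :: "(complex ^ 5 \<Rightarrow> complex ^ 5) \<Rightarrow> nat \<Rightarrow> nat \<Rightarrow> complex" where
  "matentry T i j = co (T (e j)) i"

definition has_matrix :: "(complex ^ 5 \<Rightarrow> complex ^ 5) \<Rightarrow> complex list list \<Rightarrow> bool" where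
  "has_matrix T M \<longleftrightarrow>
     (\<forall>i\<in>{1..5}. \<forall>j\<in>{1..5}. matentry T i j = M ! (i - 1) ! (j - 1))"

end

theory Submission
  imports Defs
begin

(* An automorphism is determined by a = phi(e_1) and d = phi(e_4), and the relations
   (e_1 e_1) e_4 = 0 and e_1 e_4 = e_4 e_4 force d = (0, 0, d3, a1 + a4, d5).  Conversely every
   such choice with a1 (a1 + a4) \<noteq> 0 gives an automorphism, so T is a local automorphism iff
   each T v lies in the orbit of v under this seven-parameter family.  Testing on e_1, ..., e_5,
   e_1 - e_4 and e_2 - e_5 forces the stated matrix shape.  Conversely, for a matrix of that shape
   and a vector v, the parameters are found by solving linear equations, depending on which of
   v_1, v_4, v_2 is the first nonzero coordinate, together with square roots of b22, b22 + b52
   and a cube root of b33. *)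

(* Keeps the index 1 from being rewritten to Suc 0, so the coordinate simp rules below apply. *)
declare One_nat_def [simp del]

lemma exhaust_5:
  fixes i :: 5
  shows "i = 1 \<or> i = 2 \<or> i = 3 \<or> i = 4 \<or> i = 5"
proof (induct i)
  case (of_int z)
  then have "z = 0 \<or> z = 1 \<or> z = 2 \<or> z = 3 \<or> z = 4" by fastforce
  moreover have "(5::5) = 0" by simp
  ultimately show ?case by auto
qed

lemma co_add [simp]: "co (x + y) k = co x k + co y k"
  and co_diff [simp]: "co (x - y) k = co x k - co y k"
  and co_scale [simp]: "co (c *s x) k = c * co x k"
  and co_zero [simp]: "co 0 k = 0"
  by (simp_all add: co_def)

lemma co_e [simp]: "j \<in> {1..5} \<Longrightarrow> k \<in> {1..5} \<Longrightarrow> co (e j) k = (if j = k then 1 else 0)"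
  by (auto simp: co_def e_def axis_def ix_def atLeastAtMost_iff le_Suc_eq numeral_eq_Suc)

lemma vec_eq_iff_co:
  "x = y \<longleftrightarrow> co x 1 = co y 1 \<and> co x 2 = co y 2 \<and> co x 3 = co y 3 \<and> co x 4 = co y 4 \<and> co x 5 = co y 5"
proof
  assume "co x 1 = co y 1 \<and> co x 2 = co y 2 \<and> co x 3 = co y 3 \<and> co x 4 = co y 4 \<and> co x 5 = co y 5"
  then have "x $ i = y $ i" for i
    using exhaust_5[of i] by (auto simp: co_def ix_def)
  then show "x = y" by (simp add: vec_eq_iff)
qed simp

definition vec5 :: "complex \<Rightarrow> complex \<Rightarrow> complex \<Rightarrow> complex \<Rightarrow> complex \<Rightarrow> complex ^ 5" where
  "vec5 c1 c2 c3 c4 c5 = c1 *s e 1 + c2 *s e 2 + c3 *s e 3 + c4 *s e 4 + c5 *s e 5"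

lemma co_vec5 [simp]:
  "co (vec5 c1 c2 c3 c4 c5) 1 = c1" "co (vec5 c1 c2 c3 c4 c5) 2 = c2" "co (vec5 c1 c2 c3 c4 c5) 3 = c3"
  "co (vec5 c1 c2 c3 c4 c5) 4 = c4" "co (vec5 c1 c2 c3 c4 c5) 5 = c5"
  by (simp_all add: vec5_def)

lemma clinear_iff: "clinear f \<longleftrightarrow> (\<forall>x y. f (x + y) = f x + f y) \<and> (\<forall>c x. f (c *s x) = c *s f x)"
  unfolding clinear_def by (subst Vector_Spaces.linear_iff) (simp add: vec.vector_space_axioms)

lemma co_clinear_image:
  assumes "clinear f"
  shows "co (f x) k = co x 1 * matentry f k 1 + co x 2 * matentry f k 2 + co x 3 * matentry f k 3
     + co x 4 * matentry f k 4 + co x 5 * matentry f k 5"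
proof -
  have "x = vec5 (co x 1) (co x 2) (co x 3) (co x 4) (co x 5)"
    by (simp add: vec_eq_iff_co)
  then have "f x = f (vec5 (co x 1) (co x 2) (co x 3) (co x 4) (co x 5))"
    by (rule arg_cong)
  also have "\<dots> = co x 1 *s f (e 1) + co x 2 *s f (e 2) + co x 3 *s f (e 3) + co x 4 *s f (e 4)
      + co x 5 *s f (e 5)"
    using assms by (simp add: clinear_iff vec5_def)
  finally show ?thesis by (simp add: matentry_def)
qed

lemma complex_root_exists:
  fixes c :: complex
  assumes "c \<noteq> 0" "n > 0"
  obtains z where "z ^ n = c"
proof -
  have "{z. z ^ n = c} \<noteq> {}"
    using card_nth_roots[OF assms] assms(2) by (metis card.empty less_irrefl)
  then show ?thesis using that by blast
qed

lemma co_pi2_mult [simp]: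
  "co (pi2_mult x y) 1 = 0"
  "co (pi2_mult x y) 2 = co x 1 * co y 1"
  "co (pi2_mult x y) 3 = co x 1 * co y 2 + co x 2 * co y 1"
  "co (pi2_mult x y) 4 = 0"
  "co (pi2_mult x y) 5 = co x 1 * co y 4 + co x 4 * co y 1 + co x 4 * co y 4"
  by (simp_all add: pi2_mult_def)

lemma pi2_mult_e:
  "pi2_mult (e 1) (e 1) = e 2" "pi2_mult (e 1) (e 2) = e 3" "pi2_mult (e 2) (e 4) = 0"
  "pi2_mult (e 1) (e 4) = e 5" "pi2_mult (e 4) (e 4) = e 5"
  by (simp_all add: vec_eq_iff_co)

definition pi2_aut :: "complex \<Rightarrow> complex \<Rightarrow> complex \<Rightarrow> complex \<Rightarrow> complex \<Rightarrow> complex \<Rightarrow> complex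
    \<Rightarrow> complex ^ 5 \<Rightarrow> complex ^ 5" where
  "pi2_aut a1 a2 a3 a4 a5 d3 d5 x = vec5
     (a1 * co x 1)
     (a2 * co x 1 + a1\<^sup>2 * co x 2)
     (a3 * co x 1 + 2 * a1 * a2 * co x 2 + a1 ^ 3 * co x 3 + d3 * co x 4)
     (a4 * co x 1 + (a1 + a4) * co x 4)
     (a5 * co x 1 + ((a1 + a4)\<^sup>2 - a1\<^sup>2) * co x 2 + d5 * co x 4 + (a1 + a4)\<^sup>2 * co x 5)"

lemma co_pi2_aut [simp]:
  "co (pi2_aut a1 a2 a3 a4 a5 d3 d5 x) 1 = a1 * co x 1"
  "co (pi2_aut a1 a2 a3 a4 a5 d3 d5 x) 2 = a2 * co x 1 + a1\<^sup>2 * co x 2"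
  "co (pi2_aut a1 a2 a3 a4 a5 d3 d5 x) 3 = a3 * co x 1 + 2 * a1 * a2 * co x 2 + a1 ^ 3 * co x 3 + d3 * co x 4"
  "co (pi2_aut a1 a2 a3 a4 a5 d3 d5 x) 4 = a4 * co x 1 + (a1 + a4) * co x 4"
  "co (pi2_aut a1 a2 a3 a4 a5 d3 d5 x) 5 =
     a5 * co x 1 + ((a1 + a4)\<^sup>2 - a1\<^sup>2) * co x 2 + d5 * co x 4 + (a1 + a4)\<^sup>2 * co x 5"
  by (simp_all add: pi2_aut_def)

lemma clinear_pi2_aut: "clinear (pi2_aut a1 a2 a3 a4 a5 d3 d5)"
  by (simp add: clinear_iff vec_eq_iff_co algebra_simps)

lemma pi2_aut_mult:
  "pi2_aut a1 a2 a3 a4 a5 d3 d5 (pi2_mult x y) =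
     pi2_mult (pi2_aut a1 a2 a3 a4 a5 d3 d5 x) (pi2_aut a1 a2 a3 a4 a5 d3 d5 y)"
  by (simp add: vec_eq_iff_co algebra_simps power2_eq_square power3_eq_cube)

lemma inj_pi2_aut:
  assumes "a1 \<noteq> 0" "a1 + a4 \<noteq> 0"
  shows "inj (pi2_aut a1 a2 a3 a4 a5 d3 d5)"
  using assms
  by (auto simp: vec.linear_inj_iff_eq_0[OF clinear_pi2_aut[unfolded clinear_def]] vec_eq_iff_co)

lemma pi2_automorphism_pi2_aut:
  assumes "a1 \<noteq> 0" "a1 + a4 \<noteq> 0"
  shows "pi2_automorphism (pi2_aut a1 a2 a3 a4 a5 d3 d5)"
proof -
  have "bij (pi2_aut a1 a2 a3 a4 a5 d3 d5)"
    using inj_pi2_aut[OF assms] vec.linear_inj_imp_surj[OF clinear_pi2_aut[unfolded clinear_def]]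
    by (simp add: bij_def)
  then show ?thesis
    using clinear_pi2_aut pi2_aut_mult by (simp add: pi2_automorphism_def)
qed

lemma pi2_automorphism_imp_pi2_aut:
  assumes "pi2_automorphism \<phi>"
  obtains a1 a2 a3 a4 a5 d3 d5 where "a1 \<noteq> 0" "a1 + a4 \<noteq> 0" "\<phi> = pi2_aut a1 a2 a3 a4 a5 d3 d5"
proof -
  have lin: "clinear \<phi>" and inj: "inj \<phi>" and hom: "\<And>x y. \<phi> (pi2_mult x y) = pi2_mult (\<phi> x) (\<phi> y)"
    using assms unfolding pi2_automorphism_def by (auto simp: bij_def)
  define a where "a = \<phi> (e 1)"
  define d where "d = \<phi> (e 4)"
  have e2: "\<phi> (e 2) = pi2_mult a a" and e3: "\<phi> (e 3) = pi2_mult a (pi2_mult a a)"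
    and e5: "\<phi> (e 5) = pi2_mult d d" and e5': "\<phi> (e 5) = pi2_mult a d"
    and e24: "pi2_mult (pi2_mult a a) d = 0"
    using hom[of "e 1" "e 1"] hom[of "e 1" "e 2"] hom[of "e 4" "e 4"] hom[of "e 1" "e 4"]
      hom[of "e 2" "e 4"] vec.linear_0[OF lin[unfolded clinear_def]]
    by (simp_all add: pi2_mult_e a_def d_def)
  have "\<phi> (e k) \<noteq> 0" if "k \<in> {1..5}" for k
    using inj vec.linear_0[OF lin[unfolded clinear_def]] co_e[OF that that]
    by (metis co_zero injD zero_neq_one)
  then have e3_nz: "\<phi> (e 3) \<noteq> 0" and e5_nz: "\<phi> (e 5) \<noteq> 0" by simp_all
  have a1: "co a 1 \<noteq> 0"
    using e3_nz unfolding e3 by (auto simp: vec_eq_iff_co)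
  have d1: "co d 1 = 0"
    using arg_cong[OF e24, of "\<lambda>v. co v 3"] a1 by simp
  have d2: "co d 2 = 0"
    using arg_cong[OF trans[OF e5'[symmetric] e5], of "\<lambda>v. co v 3"] a1 d1 by simp
  have d4: "co d 4 \<noteq> 0"
    using e5_nz unfolding e5 by (auto simp: vec_eq_iff_co d1 d2)
  moreover have "(co a 1 + co a 4) * co d 4 = co d 4 * co d 4"
    using arg_cong[OF trans[OF e5'[symmetric] e5], of "\<lambda>v. co v 5"] d1
    by (simp add: algebra_simps)
  ultimately have d4_eq: "co d 4 = co a 1 + co a 4"
    by simp
  show ?thesis
  proof
    show "co a 1 \<noteq> 0" by (fact a1)
    show "co a 1 + co a 4 \<noteq> 0" using d4 d4_eq by simp
    show "\<phi> = pi2_aut (co a 1) (co a 2) (co a 3) (co a 4) (co a 5) (co d 3) (co d 5)"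
    proof
      fix x
      show "\<phi> x = pi2_aut (co a 1) (co a 2) (co a 3) (co a 4) (co a 5) (co d 3) (co d 5) x"
        unfolding vec_eq_iff_co co_clinear_image[OF lin]
        unfolding matentry_def using d1 d2 d4_eq
        by (simp add: e2 e3 e5 a_def[symmetric] d_def[symmetric] algebra_simps power2_eq_square power3_eq_cube)
    qed
  qed
qed

lemma pi2_automorphism_iff:
  "pi2_automorphism \<phi> \<longleftrightarrow>
     (\<exists>a1 a2 a3 a4 a5 d3 d5. a1 \<noteq> 0 \<and> a1 + a4 \<noteq> 0 \<and> \<phi> = pi2_aut a1 a2 a3 a4 a5 d3 d5)"
  by (metis pi2_automorphism_imp_pi2_aut pi2_automorphism_pi2_aut)

definition pi2_orbit :: "complex ^ 5 \<Rightarrow> (complex ^ 5) set" where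
  "pi2_orbit x = {pi2_aut a1 a2 a3 a4 a5 d3 d5 x | a1 a2 a3 a4 a5 d3 d5. a1 \<noteq> 0 \<and> a1 + a4 \<noteq> 0}"

lemma pi2_orbitI:
  "y = pi2_aut a1 a2 a3 a4 a5 d3 d5 x \<Longrightarrow> a1 \<noteq> 0 \<Longrightarrow> a1 + a4 \<noteq> 0 \<Longrightarrow> y \<in> pi2_orbit x"
  unfolding pi2_orbit_def by blast

lemma pi2_local_automorphism_iff_orbit:
  "pi2_local_automorphism T \<longleftrightarrow> clinear T \<and> (\<forall>v. T v \<in> pi2_orbit v)"
  unfolding pi2_local_automorphism_def pi2_automorphism_iff pi2_orbit_def by blast

definition pi2_local_map :: "complex \<Rightarrow> complex \<Rightarrow> complex \<Rightarrow> complex \<Rightarrow> complex \<Rightarrow> complex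
    \<Rightarrow> complex \<Rightarrow> complex \<Rightarrow> complex \<Rightarrow> complex \<Rightarrow> complex \<Rightarrow> complex ^ 5 \<Rightarrow> complex ^ 5" where
  "pi2_local_map b11 b21 b22 b31 b32 b33 b34 b41 b51 b52 b54 x = vec5
     (b11 * co x 1)
     (b21 * co x 1 + b22 * co x 2)
     (b31 * co x 1 + b32 * co x 2 + b33 * co x 3 + b34 * co x 4)
     (b41 * co x 1 + (b41 + b11) * co x 4)
     (b51 * co x 1 + b52 * co x 2 + b54 * co x 4 + (b22 + b52) * co x 5)"

lemma co_pi2_local_map [simp]:
  "co (pi2_local_map b11 b21 b22 b31 b32 b33 b34 b41 b51 b52 b54 x) 1 = b11 * co x 1"
  "co (pi2_local_map b11 b21 b22 b31 b32 b33 b34 b41 b51 b52 b54 x) 2 = b21 * co x 1 + b22 * co x 2"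
  "co (pi2_local_map b11 b21 b22 b31 b32 b33 b34 b41 b51 b52 b54 x) 3 =
     b31 * co x 1 + b32 * co x 2 + b33 * co x 3 + b34 * co x 4"
  "co (pi2_local_map b11 b21 b22 b31 b32 b33 b34 b41 b51 b52 b54 x) 4 = b41 * co x 1 + (b41 + b11) * co x 4"
  "co (pi2_local_map b11 b21 b22 b31 b32 b33 b34 b41 b51 b52 b54 x) 5 =
     b51 * co x 1 + b52 * co x 2 + b54 * co x 4 + (b22 + b52) * co x 5"
  by (simp_all add: pi2_local_map_def)

lemma has_matrix_unique:
  assumes S: "clinear S" and T: "clinear T" and "has_matrix S M" "has_matrix T M"
  shows "S = T"
proof -
  have "matentry S i j = matentry T i j" if "i \<in> {1..5}" "j \<in> {1..5}" for i j
    using assms that by (simp add: has_matrix_def)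
  then show ?thesis
    by (simp add: fun_eq_iff vec_eq_iff_co co_clinear_image[OF S] co_clinear_image[OF T])
qed

lemma clinear_pi2_local_map: "clinear (pi2_local_map b11 b21 b22 b31 b32 b33 b34 b41 b51 b52 b54)"
  by (simp add: clinear_iff vec_eq_iff_co algebra_simps)

lemma has_matrix_pi2_local_map:
  "has_matrix (pi2_local_map b11 b21 b22 b31 b32 b33 b34 b41 b51 b52 b54)
      [[b11, 0,   0,   0,         0],
       [b21, b22, 0,   0,         0],
       [b31, b32, b33, b34,       0],
       [b41, 0,   0,   b41 + b11, 0],
       [b51, b52, 0,   b54,       b22 + b52]]"
proof -
  have "{1..5::nat} = {1, 2, 3, 4, 5}" by auto
  then show ?thesis by (simp add: has_matrix_def matentry_def)
qed

lemma has_matrix_iff_pi2_local_map: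
  assumes "clinear T"
  shows "has_matrix T
      [[b11, 0,   0,   0,         0],
       [b21, b22, 0,   0,         0],
       [b31, b32, b33, b34,       0],
       [b41, 0,   0,   b41 + b11, 0],
       [b51, b52, 0,   b54,       b22 + b52]]
    \<longleftrightarrow> T = pi2_local_map b11 b21 b22 b31 b32 b33 b34 b41 b51 b52 b54"
    (is "has_matrix T ?M \<longleftrightarrow> T = ?L")
proof
  assume "has_matrix T ?M"
  then show "T = ?L"
    by (rule has_matrix_unique[OF assms clinear_pi2_local_map _ has_matrix_pi2_local_map])
qed (simp add: has_matrix_pi2_local_map)

lemma pi2_local_map_in_orbit:
  assumes "b11 * b22 * b33 * (b41 + b11) * (b22 + b52) \<noteq> 0"
  shows "pi2_local_map b11 b21 b22 b31 b32 b33 b34 b41 b51 b52 b54 x \<in> pi2_orbit x"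
proof -
  have nz: "b11 \<noteq> 0" "b22 \<noteq> 0" "b33 \<noteq> 0" "b41 + b11 \<noteq> 0" "b22 + b52 \<noteq> 0"
    using assms by auto
  obtain q where q: "q\<^sup>2 = b22" using complex_root_exists[OF nz(2), where n = 2] by auto
  obtain t where t: "t\<^sup>2 = b22 + b52" using complex_root_exists[OF nz(5), where n = 2] by auto
  obtain r where r: "r ^ 3 = b33" using complex_root_exists[OF nz(3), where n = 3] by auto
  have roots_nz: "q \<noteq> 0" "t \<noteq> 0" "r \<noteq> 0"
    using q t r nz by auto
  define x1 x2 x3 x4 x5 where "x1 = co x 1" "x2 = co x 2" "x3 = co x 3" "x4 = co x 4" "x5 = co x 5"
  note x_defs = this[symmetric]
  let ?y = "pi2_local_map b11 b21 b22 b31 b32 b33 b34 b41 b51 b52 b54 x"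
  \<comment> \<open>The first nonzero among x1, x4, x2 lets the free parameters a2, a3, a5 (resp. d3, d5,
    resp. a2) absorb the off-diagonal entries; a1 and a1 + a4 are roots of diagonal entries.\<close>
  consider "x1 \<noteq> 0" | "x1 = 0" "x4 \<noteq> 0" | "x1 = 0" "x4 = 0" "x2 \<noteq> 0" | "x1 = 0" "x4 = 0" "x2 = 0"
    by blast
  then show ?thesis
  proof cases
    case 1
    define a2 where "a2 = (b21 * x1 + b22 * x2 - b11\<^sup>2 * x2) / x1"
    have "?y = pi2_aut b11 a2
        ((b31 * x1 + b32 * x2 + b33 * x3 + b34 * x4 - 2 * b11 * a2 * x2 - b11 ^ 3 * x3) / x1) b41
        ((b51 * x1 + b52 * x2 + b54 * x4 + (b22 + b52) * x5 - ((b11 + b41)\<^sup>2 - b11\<^sup>2) * x2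
          - (b11 + b41)\<^sup>2 * x5) / x1) 0 0 x"
      using 1 by (simp add: vec_eq_iff_co x_defs a2_def field_simps)
    then show ?thesis by (rule pi2_orbitI) (use nz in \<open>simp_all add: add.commute\<close>)
  next
    case 2
    have "?y = pi2_aut q 0 0 (b41 + b11 - q) 0
        ((b32 * x2 + b33 * x3 + b34 * x4 - q ^ 3 * x3) / x4)
        ((b52 * x2 + b54 * x4 + (b22 + b52) * x5 - ((b41 + b11)\<^sup>2 - q\<^sup>2) * x2
          - (b41 + b11)\<^sup>2 * x5) / x4) x"
      using 2 q roots_nz by (simp add: vec_eq_iff_co x_defs field_simps)
    then show ?thesis by (rule pi2_orbitI) (use roots_nz nz in simp_all)
  next
    case 3
    have "?y = pi2_aut q ((b32 * x2 + b33 * x3 - q ^ 3 * x3) / (2 * q * x2)) 0 (t - q) 0 0 0 x"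
      using 3 q t roots_nz by (simp add: vec_eq_iff_co x_defs field_simps)
    then show ?thesis by (rule pi2_orbitI) (use roots_nz nz in simp_all)
  next
    case 4
    have "?y = pi2_aut r 0 0 (t - r) 0 0 0 x"
      using 4 r t by (simp add: vec_eq_iff_co x_defs field_simps)
    then show ?thesis by (rule pi2_orbitI) (use roots_nz nz in simp_all)
  qed
qed

lemma orbit_preserving_imp_pi2_local_map:
  assumes lin: "clinear T" and orbit: "\<And>v. T v \<in> pi2_orbit v"
  obtains b11 b21 b22 b31 b32 b33 b34 b41 b51 b52 b54
  where "T = pi2_local_map b11 b21 b22 b31 b32 b33 b34 b41 b51 b52 b54"
    and "b11 * b22 * b33 * (b41 + b11) * (b22 + b52) \<noteq> 0"
proof -
  have aut: "\<exists>a1 a2 a3 a4 a5 d3 d5. a1 \<noteq> 0 \<and> a1 + a4 \<noteq> 0 \<and> T v = pi2_aut a1 a2 a3 a4 a5 d3 d5 v" for v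
    using orbit[of v] unfolding pi2_orbit_def by blast
  let ?m = "matentry T"
  have col1: "?m 1 1 \<noteq> 0"
    using aut[of "e 1"] by (auto simp: matentry_def)
  have col2: "?m 1 2 = 0" "?m 2 2 \<noteq> 0" "?m 4 2 = 0"
    using aut[of "e 2"] by (auto simp: matentry_def)
  have col3: "?m 1 3 = 0" "?m 2 3 = 0" "?m 3 3 \<noteq> 0" "?m 4 3 = 0" "?m 5 3 = 0"
    using aut[of "e 3"] by (auto simp: matentry_def)
  have col4: "?m 1 4 = 0" "?m 2 4 = 0" "?m 4 4 \<noteq> 0"
    using aut[of "e 4"] by (auto simp: matentry_def)
  have col5: "?m 1 5 = 0" "?m 2 5 = 0" "?m 3 5 = 0" "?m 4 5 = 0" "?m 5 5 \<noteq> 0"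
    using aut[of "e 5"] by (auto simp: matentry_def)
  \<comment> \<open>Every automorphism multiplies x1 + x4 by a1 + a4, and on vectors with x1 = x4 = 0 it
    multiplies x2 + x5 by (a1 + a4)^2.\<close>
  have "co (T (e 1 - e 4)) 1 + co (T (e 1 - e 4)) 4 = 0"
    using aut[of "e 1 - e 4"] by auto
  then have diag4: "?m 4 4 = ?m 4 1 + ?m 1 1"
    using col4 by (simp add: co_clinear_image[OF lin] algebra_simps)
  have "co (T (e 2 - e 5)) 2 + co (T (e 2 - e 5)) 5 = 0"
    using aut[of "e 2 - e 5"] by auto
  then have diag5: "?m 5 5 = ?m 2 2 + ?m 5 2"
    using col5 by (simp add: co_clinear_image[OF lin] algebra_simps)
  show ?thesis
  proof
    show "T = pi2_local_map (?m 1 1) (?m 2 1) (?m 2 2) (?m 3 1) (?m 3 2) (?m 3 3) (?m 3 4) (?m 4 1)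
        (?m 5 1) (?m 5 2) (?m 5 4)"
      using col1 col2 col3 col4 col5 diag4 diag5
      by (simp add: fun_eq_iff vec_eq_iff_co co_clinear_image[OF lin] algebra_simps)
    show "?m 1 1 * ?m 2 2 * ?m 3 3 * (?m 4 1 + ?m 1 1) * (?m 2 2 + ?m 5 2) \<noteq> 0"
      using col1 col2 col3 col4 col5 diag4 diag5 by simp
  qed
qed

theorem theorem3p2:
  fixes T :: "complex ^ 5 \<Rightarrow> complex ^ 5"
  assumes "clinear T"
  shows "pi2_local_automorphism T \<longleftrightarrow>
    (\<exists>b11 b21 b22 b31 b32 b33 b34 b41 b51 b52 b54.
       has_matrix T
         [[b11, 0,   0,   0,         0],
          [b21, b22, 0,   0,         0],
          [b31, b32, b33, b34,       0],
          [b41, 0,   0,   b41 + b11, 0],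
          [b51, b52, 0,   b54,       b22 + b52]] \<and>
       b11 * b22 * b33 * (b41 + b11) * (b22 + b52) \<noteq> 0)"
proof -
  have "pi2_local_automorphism T \<longleftrightarrow> (\<forall>v. T v \<in> pi2_orbit v)"
    using assms by (simp add: pi2_local_automorphism_iff_orbit)
  also have "\<dots> \<longleftrightarrow> (\<exists>b11 b21 b22 b31 b32 b33 b34 b41 b51 b52 b54.
      T = pi2_local_map b11 b21 b22 b31 b32 b33 b34 b41 b51 b52 b54 \<and>
      b11 * b22 * b33 * (b41 + b11) * (b22 + b52) \<noteq> 0)"
    using orbit_preserving_imp_pi2_local_map[OF assms] pi2_local_map_in_orbit by metis
  finally show ?thesis
    by (simp only: has_matrix_iff_pi2_local_map[OF assms])
qed

end
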